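(* Let $k\ge 4$ and $n>2k$ be integers, and let $$\mathcal C=\mathcal A_3(n,k)=\Big\{A\in\binom{[n]}{k}: 1\in A,\ A\cap\{2,3,4\}\neq\varnothing\Big\}\cup\Big\{A\in\binom{[n]}{k}:\{2,3,4\}\subset A\Big\},$$ and let $\mathcal S_1=\{A\in\binom{[n]}{k}: 1\in A\}$. Then $$|\mathcal D(\mathcal C)|=5\sum_{i=0}^{k-2}\binom{n-4}{i}+3\sum_{i=0}^{k-3}\binom{n-4}{i},\qquad |\mathcal D(\mathcal S_1)|-|\mathcal D(\mathcal C)|=\binom{n-4}{k-1}-\binom{n-3}{k-2}.$$ In particular, if $(n-k-1)(n-k-2)<(n-3)(k-1)$ (equivalently $n^2-(3k+2)n+k^2+6k-1<0$), then $\mathcal C$ is an intersecting family with $|\mathcal D(\mathcal C)|>\sum_{0\le\ell<k}\binom{n-1}{\ell}$.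
   Context: $[n]=\{1,\dots,n\}$; $\binom{[n]}{k}$ is the family of all $k$-element subsets of $[n]$. $\mathcal D(\mathcal F):=\{F\setminus F' : F,F'\in\mathcal F\}$. Note $|\mathcal D(\mathcal S_1)|=\sum_{0\le\ell<k}\binom{n-1}{\ell}$. *)

theory Defs
  imports Main
begin

definition ksubsets :: "nat \<Rightarrow> nat \<Rightarrow> nat set set" where
  "ksubsets n k = {A. A \<subseteq> {1..n} \<and> card A = k}"

definition diff_family :: "'a set set \<Rightarrow> 'a set set" where
  "diff_family F = {A - B | A B. A \<in> F \<and> B \<in> F}"

definition intersecting :: "'a set set \<Rightarrow> bool" where
  "intersecting F \<longleftrightarrow> (\<forall>A\<in>F. \<forall>B\<in>F. A \<inter> B \<noteq> {})"

definition A3 :: "nat \<Rightarrow> nat \<Rightarrow> nat set set" where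
  "A3 n k = {A \<in> ksubsets n k. 1 \<in> A \<and> A \<inter> {2,3,4} \<noteq> {}}
          \<union> {A \<in> ksubsets n k. {2,3,4} \<subseteq> A}"

definition star1 :: "nat \<Rightarrow> nat \<Rightarrow> nat set set" where
  "star1 n k = {A \<in> ksubsets n k. 1 \<in> A}"

end

theory Submission
  imports Defs
begin

text \<open>A difference A - B of two members of the family splits into its trace t on {1,2,3,4}
  and its tail in {5..n}. Since B is itself a member, t avoids enough of B to be one of eight
  traces; since A and B intersect (in at least two points when t is empty, because A has at
  least two elements in {1,2,3,4}), the tail has at most k - 2 elements, or k - 3 when |t| = 2.
  Conversely, as n > 2k, every such set is a difference: a suitable pair of small members on
  {1,2,3,4} is padded with a common block of fresh elements.
  Comparing with the star via Pascal's rule leaves the two binomial coefficients of the second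
  claim, and their quotient is (n-k-1)(n-k-2)/((n-3)(k-1)).\<close>

definition A3_shape :: "nat set \<Rightarrow> bool" where
  "A3_shape S \<longleftrightarrow> (1 \<in> S \<and> S \<inter> {2,3,4} \<noteq> {}) \<or> {2,3,4} \<subseteq> S"

lemma A3_eq: "A3 n k = {A \<in> ksubsets n k. A3_shape A}"
  unfolding A3_def A3_shape_def by auto

lemma A3_shape_mono: "A3_shape S \<Longrightarrow> S \<subseteq> T \<Longrightarrow> A3_shape T"
  unfolding A3_shape_def by blast

lemma A3_shape_Int_nonempty: "A3_shape A \<Longrightarrow> A3_shape B \<Longrightarrow> A \<inter> B \<noteq> {}"
  unfolding A3_shape_def by blast

lemma A3_shape_card_trace: "A3_shape S \<Longrightarrow> 2 \<le> card (S \<inter> {1,2,3,4})"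
proof (unfold A3_shape_def, elim disjE conjE)
  assume "1 \<in> S" "S \<inter> {2,3,4} \<noteq> {}"
  then obtain j where "j \<in> S" "j \<in> {2,3,4::nat}" by blast
  then have "{1,j} \<subseteq> S \<inter> {1,2,3,4}" "card {1,j} = 2" using \<open>1 \<in> S\<close> by auto
  then show ?thesis using card_mono[of "S \<inter> {1,2,3,4}" "{1,j}"] by simp
next
  assume "{2,3,4} \<subseteq> S"
  then have "{2,3,4} \<subseteq> S \<inter> {1,2,3,4}" by blast
  then show ?thesis using card_mono[of "S \<inter> {1,2,3,4}" "{2,3,4}"] by simp
qed

lemma diff_family_upclosed_memberI:
  assumes up: "\<And>S T. P S \<Longrightarrow> S \<subseteq> T \<Longrightarrow> P T"
    and A: "A \<subseteq> {1..n}" "P A" "card A \<le> k"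
    and B: "B \<subseteq> {1..n}" "P B" "card B \<le> card A"
    and W: "W \<subseteq> {1..n}" "W \<inter> (A \<union> B) = {}" "k - card B \<le> card W"
  shows "A - B \<in> diff_family {S \<in> ksubsets n k. P S}"
proof -
  have fin: "finite A" "finite B" "finite W"
    using A(1) B(1) W(1) by (auto intro: finite_subset)
  obtain G where G: "G \<subseteq> W" "card G = k - card B"
    using obtain_subset_with_card_n[OF W(3)] by blast
  have "k - card A \<le> card G" using G B(3) by simp
  then obtain F where F: "F \<subseteq> G" "card F = k - card A"
    by (rule obtain_subset_with_card_n)
  have "finite F" "finite G" using F G fin by (auto intro: finite_subset)
  then have "card (A \<union> F) = k" "card (B \<union> G) = k"
    using card_Un_disjoint[of A F] card_Un_disjoint[of B G] fin F G W(2) A(3) B(3) by auto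
  moreover have "A \<union> F \<subseteq> {1..n}" "B \<union> G \<subseteq> {1..n}" "P (A \<union> F)" "P (B \<union> G)"
    using A B F G W(1) up[of A] up[of B] by auto
  ultimately have "A \<union> F \<in> {S \<in> ksubsets n k. P S}" "B \<union> G \<in> {S \<in> ksubsets n k. P S}"
    unfolding ksubsets_def by blast+
  moreover have "(A \<union> F) - (B \<union> G) = A - B" using F G W(2) by auto
  ultimately show ?thesis unfolding diff_family_def by blast
qed

definition extensions :: "nat \<Rightarrow> nat set \<Rightarrow> nat \<Rightarrow> nat set set" where
  "extensions n t b = {t \<union> r | r. r \<subseteq> {5..n} \<and> card r \<le> b}"

definition A3_traces :: "nat set set" where
  "A3_traces = {{}, {1}, {2}, {3}, {4}, {2,3}, {2,4}, {3,4}}"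

definition A3_budget :: "nat \<Rightarrow> nat set \<Rightarrow> nat" where
  "A3_budget k t = (if card t = 2 then k - 3 else k - 2)"

lemma card_subsets_card_le:
  assumes "finite S"
  shows "card {r. r \<subseteq> S \<and> card r \<le> b} = (\<Sum>i=0..b. card S choose i)"
proof -
  have "{r. r \<subseteq> S \<and> card r \<le> b} = (\<Union>i\<in>{0..b}. {r. r \<subseteq> S \<and> card r = i})" by auto
  also have "card \<dots> = (\<Sum>i=0..b. card {r. r \<subseteq> S \<and> card r = i})"
    by (rule card_UN_disjoint) (use assms in \<open>auto intro: finite_subset[of _ "Pow S"]\<close>)
  also have "\<dots> = (\<Sum>i=0..b. card S choose i)" using n_subsets[OF assms] by simp
  finally show ?thesis .
qed

lemma head_Int_tail_empty: "X \<subseteq> {1,2,3,4::nat} \<Longrightarrow> Y \<subseteq> {5..n} \<Longrightarrow> X \<inter> Y = {}"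
  by fastforce

lemma extensions_eq_image:
  "extensions n t b = (\<lambda>r. t \<union> r) ` {r. r \<subseteq> {5..n} \<and> card r \<le> b}"
  unfolding extensions_def by blast

lemma extensions_trace: "X \<in> extensions n t b \<Longrightarrow> t \<subseteq> {1,2,3,4} \<Longrightarrow> X \<inter> {1,2,3,4} = t"
  unfolding extensions_def by auto

lemma extensions_disjoint:
  "t \<subseteq> {1,2,3,4} \<Longrightarrow> t' \<subseteq> {1,2,3,4} \<Longrightarrow> t \<noteq> t' \<Longrightarrow> extensions n t b \<inter> extensions n t' b' = {}"
  using extensions_trace by blast

lemma finite_extensions: "finite (extensions n t b)"
  unfolding extensions_eq_image by simp

lemma card_extensions:
  assumes "t \<subseteq> {1,2,3,4}"
  shows "card (extensions n t b) = (\<Sum>i=0..b. (n-4) choose i)"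
proof -
  have "inj_on (\<lambda>r. t \<union> r) {r. r \<subseteq> {5..n} \<and> card r \<le> b}"
    by (rule inj_on_inverseI[where g = "\<lambda>X. X - {1,2,3,4}"]) (use assms in auto)
  then show ?thesis
    unfolding extensions_eq_image by (simp add: card_image card_subsets_card_le)
qed

lemma A3_traces_subset: "t \<in> A3_traces \<Longrightarrow> t \<subseteq> {1,2,3,4}"
  unfolding A3_traces_def by auto

lemma trace_in_A3_traces:
  assumes "A3_shape B" "t \<subseteq> {1,2,3,4} - B"
  shows "t \<in> A3_traces"
proof -
  have "1 \<in> t \<Longrightarrow> t = {1}" and "\<not> {2,3,4} \<subseteq> t"
    using assms unfolding A3_shape_def by auto
  moreover have "t = (if 1 \<in> t then {1} else {}) \<union> (if 2 \<in> t then {2} else {})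
      \<union> (if 3 \<in> t then {3} else {}) \<union> (if 4 \<in> t then {4} else {})"
    using assms(2) by auto
  ultimately show ?thesis unfolding A3_traces_def by (auto split: if_splits)
qed

lemma sum_A3_traces_budget:
  "(\<Sum>t\<in>A3_traces. f (A3_budget k t)) = 5 * f (k-2) + 3 * f (k-3)"
  for f :: "nat \<Rightarrow> nat"
  unfolding A3_traces_def A3_budget_def by (simp add: doubleton_eq_iff)

lemma diff_family_A3_memberI:
  assumes n: "n > 2 * k"
    and a: "a \<subseteq> {1,2,3,4}" "A3_shape a" and b: "b \<subseteq> {1,2,3,4}" "A3_shape b"
    and r: "r \<subseteq> {5..n}" "card b \<le> card a + card r" "card a + card r \<le> k"
  shows "(a - b) \<union> r \<in> diff_family (A3 n k)"
proof -
  have fin: "finite a" "finite r" using a(1) r(1) by (auto intro: finite_subset)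
  have "a \<inter> {1,2,3,4} = a" "b \<inter> {1,2,3,4} = b" using a(1) b(1) by auto
  then have "2 \<le> card a" "2 \<le> card b" using A3_shape_card_trace a(2) b(2) by metis+
  have "card (a \<union> r) = card a + card r"
    using card_Un_disjoint fin head_Int_tail_empty[OF a(1) r(1)] by blast
  moreover have "card ({5..n} - r) = n - 4 - card r"
    using card_Diff_subset[OF fin(2) r(1)] by simp
  ultimately have "a \<union> r - b \<in> diff_family {S \<in> ksubsets n k. A3_shape S}"
    using a b r n \<open>2 \<le> card a\<close> \<open>2 \<le> card b\<close>
    by (intro diff_family_upclosed_memberI[where W = "{5..n} - r"])
      (auto intro: A3_shape_mono)
  moreover have "a \<union> r - b = (a - b) \<union> r" using head_Int_tail_empty[OF b(1) r(1)] by auto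
  ultimately show ?thesis unfolding A3_eq by simp
qed

lemma extensions_subset_diff_family_A3:
  assumes "k \<ge> 4" "n > 2 * k" "t \<in> A3_traces"
  shows "extensions n t (A3_budget k t) \<subseteq> diff_family (A3 n k)"
proof
  fix X assume "X \<in> extensions n t (A3_budget k t)"
  then obtain r where X: "X = t \<union> r" and r: "r \<subseteq> {5..n}" "card r \<le> A3_budget k t"
    unfolding extensions_def by blast
  note memberI = diff_family_A3_memberI[OF assms(2) _ _ _ _ r(1)]
  have shape: "A3_shape {1,2}" "A3_shape {1,3}" "A3_shape {1,4}" "A3_shape {2,3,4}"
    "A3_shape {1,2,3}" "A3_shape {1,2,4}" "A3_shape {1,3,4}"
    unfolding A3_shape_def by auto
  from assms(3) have "t \<union> r \<in> diff_family (A3 n k)"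
    unfolding A3_traces_def
  proof (elim insertE emptyE)
    assume "t = {}"
    then show ?thesis using memberI[of "{1,2}" "{1,2}"] shape r assms(1) by (simp add: A3_budget_def)
  next
    assume t: "t = {1}"
    show ?thesis
    proof (cases "r = {}")
      case True
      moreover have "{1,2,3} - {2,3,4} = {1::nat}" by auto
      ultimately show ?thesis using t memberI[of "{1,2,3}" "{2,3,4}"] shape assms(1) by simp
    next
      case False
      then have "card r \<ge> 1" using r(1) by (simp add: Suc_leI card_gt_0_iff finite_subset)
      moreover have "{1,2} - {2,3,4} = {1::nat}" by auto
      ultimately show ?thesis using t memberI[of "{1,2}" "{2,3,4}"] shape r assms(1)
        by (simp add: A3_budget_def)
    qed
  next
    assume "t = {2}"
    then show ?thesis using memberI[of "{1,2}" "{1,3}"] shape r assms(1) by (simp add: A3_budget_def)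
  next
    assume "t = {3}"
    then show ?thesis using memberI[of "{1,3}" "{1,2}"] shape r assms(1) by (simp add: A3_budget_def)
  next
    assume "t = {4}"
    then show ?thesis using memberI[of "{1,4}" "{1,2}"] shape r assms(1) by (simp add: A3_budget_def)
  next
    assume "t = {2,3}"
    then show ?thesis using memberI[of "{1,2,3}" "{1,4}"] shape r assms(1) by (simp add: A3_budget_def)
  next
    assume "t = {2,4}"
    then show ?thesis using memberI[of "{1,2,4}" "{1,3}"] shape r assms(1) by (simp add: A3_budget_def)
  next
    assume "t = {3,4}"
    then show ?thesis using memberI[of "{1,3,4}" "{1,2}"] shape r assms(1) by (simp add: A3_budget_def)
  qed
  with X show "X \<in> diff_family (A3 n k)" by simp
qed

lemma diff_family_A3_memberD:
  assumes "X \<in> diff_family (A3 n k)"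
  shows "\<exists>t\<in>A3_traces. X \<in> extensions n t (A3_budget k t)"
proof -
  obtain A B where X: "X = A - B" and A: "A \<in> A3 n k" and B: "B \<in> A3 n k"
    using assms unfolding diff_family_def by blast
  have "A \<subseteq> {1..n}" "card A = k" "A3_shape A" "A3_shape B"
    using A B unfolding A3_eq ksubsets_def by auto
  then have "finite A" by (meson finite_atLeastAtMost finite_subset)
  define t where "t = X \<inter> {1,2,3,4}"
  define r where "r = X \<inter> {5..n}"
  have "t \<subseteq> {1,2,3,4} - B" unfolding t_def X by blast
  then have t: "t \<in> A3_traces" using trace_in_A3_traces[OF \<open>A3_shape B\<close>] by blast
  have r: "r \<subseteq> {5..n}" unfolding r_def by blast
  have "X \<subseteq> {1..n}" using X \<open>A \<subseteq> {1..n}\<close> by blast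
  then have "X = t \<union> r" unfolding t_def r_def by auto
  have "finite X" using X \<open>finite A\<close> by simp
  then have "card X = card t + card r"
    using card_Un_disjoint[of t r] head_Int_tail_empty[OF A3_traces_subset[OF t] r]
    unfolding \<open>X = t \<union> r\<close> by simp
  moreover have "card X = k - card (A \<inter> B)"
    using card_Diff_subset_Int[of A B] \<open>finite A\<close> \<open>card A = k\<close> X by simp
  moreover have "card (A \<inter> B) \<ge> 1"
    using A3_shape_Int_nonempty[OF \<open>A3_shape A\<close> \<open>A3_shape B\<close>] \<open>finite A\<close>
    by (simp add: Suc_le_eq card_gt_0_iff)
  moreover have "card (A \<inter> B) \<ge> 2" if "t = {}"
  proof -
    have "A \<inter> {1,2,3,4} \<subseteq> A \<inter> B" using that X unfolding t_def by auto
    then have "card (A \<inter> {1,2,3,4}) \<le> card (A \<inter> B)"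
      using \<open>finite A\<close> by (intro card_mono) auto
    then show ?thesis using A3_shape_card_trace[OF \<open>A3_shape A\<close>] by linarith
  qed
  moreover have "card t \<le> 2" "t = {} \<or> 1 \<le> card t"
    using t unfolding A3_traces_def by auto
  ultimately have "card r \<le> A3_budget k t" unfolding A3_budget_def
    by (cases "t = {}") auto
  with t \<open>X = t \<union> r\<close> r show ?thesis unfolding extensions_def by blast
qed

lemma diff_family_A3_eq:
  assumes "k \<ge> 4" "n > 2 * k"
  shows "diff_family (A3 n k) = (\<Union>t\<in>A3_traces. extensions n t (A3_budget k t))"
proof (intro equalityI subsetI)
  fix X assume "X \<in> diff_family (A3 n k)"
  then show "X \<in> (\<Union>t\<in>A3_traces. extensions n t (A3_budget k t))"
    unfolding UN_iff by (rule diff_family_A3_memberD)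
next
  fix X assume "X \<in> (\<Union>t\<in>A3_traces. extensions n t (A3_budget k t))"
  then obtain t where "t \<in> A3_traces" "X \<in> extensions n t (A3_budget k t)" by blast
  then show "X \<in> diff_family (A3 n k)" using extensions_subset_diff_family_A3[OF assms] by blast
qed

lemma card_diff_family_A3:
  assumes "k \<ge> 4" "n > 2 * k"
  shows "card (diff_family (A3 n k))
           = 5 * (\<Sum>i=0..k-2. (n-4) choose i) + 3 * (\<Sum>i=0..k-3. (n-4) choose i)"
proof -
  have "card (diff_family (A3 n k)) = (\<Sum>t\<in>A3_traces. card (extensions n t (A3_budget k t)))"
    unfolding diff_family_A3_eq[OF assms]
  proof (rule card_UN_disjoint)
    show "finite A3_traces" unfolding A3_traces_def by simp
    show "\<forall>t\<in>A3_traces. finite (extensions n t (A3_budget k t))"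
      using finite_extensions by blast
    show "\<forall>t\<in>A3_traces. \<forall>t'\<in>A3_traces. t \<noteq> t' \<longrightarrow>
        extensions n t (A3_budget k t) \<inter> extensions n t' (A3_budget k t') = {}"
      using extensions_disjoint A3_traces_subset by metis
  qed
  also have "\<dots> = (\<Sum>t\<in>A3_traces. \<Sum>i=0..A3_budget k t. (n-4) choose i)"
    by (intro sum.cong refl card_extensions A3_traces_subset)
  finally show ?thesis using sum_A3_traces_budget[of "\<lambda>b. \<Sum>i=0..b. (n-4) choose i" k] by simp
qed

lemma diff_family_star1_eq:
  assumes "k \<ge> 1" "n > 2 * k"
  shows "diff_family (star1 n k) = {X. X \<subseteq> {2..n} \<and> card X \<le> k - 1}"
proof (intro equalityI subsetI)
  fix X assume "X \<in> diff_family (star1 n k)"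
  then obtain A B where X: "X = A - B" and A: "A \<in> star1 n k" and B: "B \<in> star1 n k"
    unfolding diff_family_def by blast
  have "A \<subseteq> {1..n}" "card A = k" "1 \<in> A" "1 \<in> B"
    using A B unfolding star1_def ksubsets_def by auto
  moreover have "finite A" using \<open>A \<subseteq> {1..n}\<close> by (rule finite_subset) simp
  moreover have "X \<subseteq> A - {1}" using X \<open>1 \<in> B\<close> by auto
  moreover have "A - {1} \<subseteq> {2..n}" using \<open>A \<subseteq> {1..n}\<close> by force
  ultimately show "X \<in> {X. X \<subseteq> {2..n} \<and> card X \<le> k - 1}"
    using card_mono[of "A - {1}" X] by auto
next
  fix X assume "X \<in> {X. X \<subseteq> {2..n} \<and> card X \<le> k - 1}"
  then have X: "X \<subseteq> {2..n}" "card X \<le> k - 1" by auto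
  then have "finite X" "1 \<notin> X" by (auto intro: finite_subset)
  then have "card (insert 1 X) = card X + 1" "card ({2..n} - X) = n - 1 - card X"
    using card_Diff_subset[OF \<open>finite X\<close> X(1)] by simp_all
  then have "insert 1 X - {1} \<in> diff_family {S \<in> ksubsets n k. 1 \<in> S}"
    using X assms
    by (intro diff_family_upclosed_memberI[where W = "{2..n} - X"]) auto
  then show "X \<in> diff_family (star1 n k)"
    using \<open>1 \<notin> X\<close> unfolding star1_def by simp
qed

lemma card_diff_family_star1:
  assumes "k \<ge> 1" "n > 2 * k"
  shows "card (diff_family (star1 n k)) = (\<Sum>l<k. (n-1) choose l)"
proof -
  have "{..<k} = {0..k-1}" using assms(1) by auto
  then show ?thesis
    unfolding diff_family_star1_eq[OF assms] by (simp add: card_subsets_card_le)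
qed

lemma sum_choose_Suc_upto:
  "(\<Sum>i=0..Suc b. Suc N choose i) = (\<Sum>i=0..Suc b. N choose i) + (\<Sum>i=0..b. N choose i)"
  by (induction b) auto

lemma sum_choose_difference_identity:
  assumes "k \<ge> 4" "n \<ge> 4"
  shows "int (\<Sum>l<k. (n-1) choose l)
           - int (5 * (\<Sum>i=0..k-2. (n-4) choose i) + 3 * (\<Sum>i=0..k-3. (n-4) choose i))
         = int ((n-4) choose (k-1)) - int ((n-3) choose (k-2))"
proof -
  obtain j m where k: "k = j + 4" and n: "n = m + 4"
    using assms by (metis add.commute le_Suc_ex)
  define S where "S N b = (\<Sum>i=0..b. N choose i)" for N b
  have Pascal: "S (Suc N) (Suc b) = S N (Suc b) + S N b" for N b
    unfolding S_def by (rule sum_choose_Suc_upto)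
  have step: "S N (Suc b) = S N b + (N choose Suc b)" for N b
    unfolding S_def by simp
  have "{..<k} = {0..Suc (Suc (Suc j))}" "n - 1 = Suc (Suc (Suc m))" using k n by auto
  then have "(\<Sum>l<k. (n-1) choose l) = S (Suc (Suc (Suc m))) (Suc (Suc (Suc j)))"
    unfolding S_def by (simp only:)
  also have "\<dots> = S m (Suc (Suc (Suc j))) + 3 * S m (Suc (Suc j)) + 3 * S m (Suc j) + S m j"
    by (simp add: Pascal)
  finally have star: "(\<Sum>l<k. (n-1) choose l)
      = S m (Suc (Suc (Suc j))) + 3 * S m (Suc (Suc j)) + 3 * S m (Suc j) + S m j" .
  have A3: "5 * (\<Sum>i=0..k-2. (n-4) choose i) + 3 * (\<Sum>i=0..k-3. (n-4) choose i)
      = 5 * S m (Suc (Suc j)) + 3 * S m (Suc j)"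
    unfolding S_def k n by (simp add: numeral_eq_Suc)
  have "(n-4) choose (k-1) = m choose Suc (Suc (Suc j))"
    "(n-3) choose (k-2) = (m choose Suc j) + (m choose Suc (Suc j))"
    unfolding k n by (simp_all add: numeral_eq_Suc)
  then show ?thesis
    unfolding star A3 using step[of m "Suc (Suc j)"] step[of m "Suc j"] step[of m j] by simp
qed

lemma choose_Suc_cross_mult:
  "(m choose Suc i) * (Suc i * Suc m) = (Suc m choose i) * ((Suc m - i) * (m - i))"
proof -
  have lower: "Suc i * (m choose Suc i) = (m - i) * (m choose i)"
    using binomial_absorption[of i m] binomial_absorb_comp[of m i] by simp
  have upper: "(Suc m - i) * (Suc m choose i) = Suc m * (m choose i)"
    using binomial_absorb_comp[of "Suc m" i] by simp
  have "(m choose Suc i) * (Suc i * Suc m) = Suc m * (Suc i * (m choose Suc i))"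
    by (simp only: mult_ac)
  also have "\<dots> = (m - i) * (Suc m * (m choose i))"
    unfolding lower by (rule mult.left_commute)
  also have "\<dots> = (Suc m choose i) * ((Suc m - i) * (m - i))"
    unfolding upper[symmetric] by (simp only: mult_ac)
  finally show ?thesis .
qed

lemma choose_less_Suc_choose:
  assumes "k \<ge> 4" "n > 2 * k"
    and "(int n - int k - 1) * (int n - int k - 2) < (int n - 3) * (int k - 1)"
  shows "(n-4) choose (k-1) < (n-3) choose (k-2)"
proof -
  define m i where "m = n - 4" and "i = k - 2"
  have "n - 3 = Suc m" "k - 1 = Suc i" using assms(1,2) unfolding m_def i_def by auto
  have "int (Suc m - i) = int n - int k - 1" "int (m - i) = int n - int k - 2"
    "int (Suc i) = int k - 1" "int (Suc m) = int n - 3"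
    using assms(1,2) unfolding m_def i_def by auto
  then have "int ((Suc m - i) * (m - i)) = (int n - int k - 1) * (int n - int k - 2)"
    "int (Suc i * Suc m) = (int n - 3) * (int k - 1)"
    by (simp_all only: of_nat_mult mult.commute)
  then have less: "(Suc m - i) * (m - i) < Suc i * Suc m" using assms(3) by linarith
  moreover have "0 < Suc m choose i" using assms(1,2) unfolding m_def i_def by simp
  ultimately have "(Suc m choose i) * ((Suc m - i) * (m - i)) < (Suc m choose i) * (Suc i * Suc m)"
    by (rule mult_strict_left_mono)
  then have "(m choose Suc i) * (Suc i * Suc m) < (Suc m choose i) * (Suc i * Suc m)"
    unfolding choose_Suc_cross_mult .
  then have "m choose Suc i < Suc m choose i" by (rule mult_right_less_imp_less) simp
  then show ?thesis
    unfolding \<open>n - 3 = Suc m\<close> \<open>k - 1 = Suc i\<close> m_def[symmetric] i_def[symmetric] by simp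
qed

theorem mainTheorem11:
  fixes n k :: nat
  assumes "k \<ge> 4" and "n > 2 * k"
  shows "card (diff_family (A3 n k))
           = 5 * (\<Sum>i=0..k-2. (n-4) choose i) + 3 * (\<Sum>i=0..k-3. (n-4) choose i)
       \<and> int (card (diff_family (star1 n k))) - int (card (diff_family (A3 n k)))
           = int ((n-4) choose (k-1)) - int ((n-3) choose (k-2))
       \<and> ((int n - int k - 1) * (int n - int k - 2) < (int n - 3) * (int k - 1) \<longrightarrow>
           intersecting (A3 n k) \<and>
           card (diff_family (A3 n k)) > (\<Sum>l<k. (n-1) choose l))"
proof -
  have A3: "card (diff_family (A3 n k))
      = 5 * (\<Sum>i=0..k-2. (n-4) choose i) + 3 * (\<Sum>i=0..k-3. (n-4) choose i)"
    using card_diff_family_A3[OF assms] .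
  have star: "card (diff_family (star1 n k)) = (\<Sum>l<k. (n-1) choose l)"
    using card_diff_family_star1 assms by simp
  have diff: "int (card (diff_family (star1 n k))) - int (card (diff_family (A3 n k)))
      = int ((n-4) choose (k-1)) - int ((n-3) choose (k-2))"
    unfolding A3 star using sum_choose_difference_identity assms by simp
  have "intersecting (A3 n k)"
    unfolding intersecting_def A3_eq using A3_shape_Int_nonempty by blast
  moreover have "card (diff_family (A3 n k)) > (\<Sum>l<k. (n-1) choose l)"
    if "(int n - int k - 1) * (int n - int k - 2) < (int n - 3) * (int k - 1)"
    using choose_less_Suc_choose[OF assms that] diff star by linarith
  ultimately show ?thesis using A3 diff by blast
qed

end
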